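(* For every countable two-sorted ultrametric space $X$ there is a topological group embedding $\mathrm{Aut}(X)\to\mathrm{Aut}(\mathbb U)$.
   Context: A two-sorted ultrametric space is $(X,d_X,D_X)$ with $D_X$ a linear order with least element $0$, $d_X\colon X\times X\to D_X$ symmetric, $d_X(x,y)=0\iff x=y$, $d_X(x,z)\le\max\{d_X(x,y),d_X(y,z)\}$; countable if both $X$ and $D_X$ are countable. $\mathrm{Aut}(X)$ is the group of dc-automorphisms (bijections $f$ of $X$ with an order automorphism $D_f$ of $D_X$ with $d(f(x),f(y))=D_f(d(x,y))$) with the topology of pointwise convergence on both sorts (both viewed as discrete). $\mathbb U$ is the countable rational Urysohn ultrametric space viewed as a two-sorted space with distance set $\mathbb Q_{\ge0}$ (equivalently the Fraïssé limit of finite two-sorted ultrametric spaces with dc-embeddings). *)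

theory Defs
  imports "HOL-Analysis.Analysis" "HOL-Algebra.Group"
begin

definition tsum_space :: "'a set \<Rightarrow> 'd::linorder set \<Rightarrow> 'd \<Rightarrow> ('a \<Rightarrow> 'a \<Rightarrow> 'd) \<Rightarrow> bool" where
  "tsum_space X D z d \<longleftrightarrow>
     z \<in> D \<and> (\<forall>e\<in>D. z \<le> e) \<and>
     (\<forall>x\<in>X. \<forall>y\<in>X. d x y \<in> D \<and> d x y = d y x \<and> (d x y = z \<longleftrightarrow> x = y)) \<and>
     (\<forall>x\<in>X. \<forall>y\<in>X. \<forall>w\<in>X. d x w \<le> max (d x y) (d y w))"

definition countable_tsum_space :: "'a set \<Rightarrow> 'd::linorder set \<Rightarrow> 'd \<Rightarrow> ('a \<Rightarrow> 'a \<Rightarrow> 'd) \<Rightarrow> bool" where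
  "countable_tsum_space X D z d \<longleftrightarrow> tsum_space X D z d \<and> countable X \<and> countable D"

text \<open>dc-automorphisms, represented as pairs (f, D_f) of maps that are the identity
  outside X resp. D (so that each automorphism has a unique representative).\<close>
definition dc_aut :: "'a set \<Rightarrow> 'd::linorder set \<Rightarrow> ('a \<Rightarrow> 'a \<Rightarrow> 'd) \<Rightarrow> (('a \<Rightarrow> 'a) \<times> ('d \<Rightarrow> 'd)) set" where
  "dc_aut X D d = {(f, g).
     bij_betw f X X \<and> (\<forall>x. x \<notin> X \<longrightarrow> f x = x) \<and>
     bij_betw g D D \<and> strict_mono_on D g \<and> (\<forall>e. e \<notin> D \<longrightarrow> g e = e) \<and>
     (\<forall>x\<in>X. \<forall>y\<in>X. d (f x) (f y) = g (d x y))}"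

definition aut_group :: "'a set \<Rightarrow> 'd::linorder set \<Rightarrow> ('a \<Rightarrow> 'a \<Rightarrow> 'd) \<Rightarrow> (('a \<Rightarrow> 'a) \<times> ('d \<Rightarrow> 'd)) monoid" where
  "aut_group X D d = \<lparr> carrier = dc_aut X D d,
     mult = (\<lambda>h k. (fst h \<circ> fst k, snd h \<circ> snd k)),
     one = (id, id) \<rparr>"

text \<open>Topology of pointwise convergence on both sorts (both discrete): generated by the
  basic sets of automorphisms agreeing with a given one on finitely many points of X and D.\<close>
definition aut_top :: "'a set \<Rightarrow> 'd::linorder set \<Rightarrow> ('a \<Rightarrow> 'a \<Rightarrow> 'd) \<Rightarrow> (('a \<Rightarrow> 'a) \<times> ('d \<Rightarrow> 'd)) topology" where
  "aut_top X D d = subtopology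
     (topology_generated_by
       {{h \<in> dc_aut X D d. (\<forall>x\<in>F. fst h x = fst h0 x) \<and> (\<forall>e\<in>E. snd h e = snd h0 e)} | h0 F E.
          h0 \<in> dc_aut X D d \<and> finite F \<and> F \<subseteq> X \<and> finite E \<and> E \<subseteq> D})
     (dc_aut X D d)"

text \<open>The rational Urysohn ultrametric space: a countable ultrametric space with distances
  in the nonnegative rationals satisfying the one-point extension property for all finite
  ultrametric one-point extensions with rational distances (characterises it up to isometry).\<close>
definition rat_urysohn_ultrametric :: "'u set \<Rightarrow> ('u \<Rightarrow> 'u \<Rightarrow> rat) \<Rightarrow> bool" where
  "rat_urysohn_ultrametric U dU \<longleftrightarrow>
     countable_tsum_space U {q. 0 \<le> q} 0 dU \<and>
     (\<forall>A (r :: 'u \<Rightarrow> rat). finite A \<and> A \<subseteq> U \<and> (\<forall>a\<in>A. 0 < r a) \<and>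
        (\<forall>a\<in>A. \<forall>b\<in>A. dU a b \<le> max (r a) (r b) \<and> r a \<le> max (dU a b) (r b))
        \<longrightarrow> (\<exists>u\<in>U. \<forall>a\<in>A. dU u a = r a))"

end

theory Submission
  imports Defs
begin

(*
  Let W = (X <+> D) \<times> nat. Words over W, i.e. finitely supported partial maps from the positive
  rationals to W, with two distinct words at distance the largest position where they differ, form a
  countable ultrametric space with the one-point extension property; by back and forth it is
  isometric to U. An automorphism (f, D_f) of X permutes the letters of W and hence acts on words
  by isometries; transported to U, this gives a group embedding of Aut(X) into Aut(U) that acts
  trivially on distances. It is continuous because the image of a word depends only on its finitely
  many letters, and a homeomorphism onto its image because (f, D_f) can be read off from the action
  on one-letter words.
*)

section \<open>Automorphism groups and the topology of pointwise convergence\<close>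

lemma dc_autD:
  assumes "h \<in> dc_aut X D d"
  shows "bij_betw (fst h) X X" "x \<notin> X \<Longrightarrow> fst h x = x"
    "bij_betw (snd h) D D" "strict_mono_on D (snd h)" "e \<notin> D \<Longrightarrow> snd h e = e"
    "x \<in> X \<Longrightarrow> y \<in> X \<Longrightarrow> d (fst h x) (fst h y) = snd h (d x y)"
  using assms unfolding dc_aut_def by auto

lemma bij_if_bij_betw_id_outside:
  assumes "bij_betw f A A" "\<And>x. x \<notin> A \<Longrightarrow> f x = x"
  shows "bij f"
proof -
  have "bij_betw f (- A) (- A)"
    using bij_betw_id by (rule bij_betw_cong[THEN iffD1, rotated]) (simp add: assms(2))
  from bij_betw_disjoint_Un[OF assms(1) this] show ?thesis
    by simp
qed

lemma bij_betw_inv_into_UNIV: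
  assumes "bij f" "bij_betw f A A"
  shows "bij_betw (inv_into UNIV f) A A"
  using bij_betw_inv_into_subset[OF assms(1) subset_UNIV bij_betw_imp_surj_on[OF assms(2)]] .

lemma dc_aut_bij:
  assumes "h \<in> dc_aut X D d"
  shows "bij (fst h)" "bij (snd h)"
  using bij_if_bij_betw_id_outside dc_autD[OF assms] by metis+

lemma dc_aut_comp:
  assumes "h \<in> dc_aut X D d" "k \<in> dc_aut X D d"
  shows "(fst h \<circ> fst k, snd h \<circ> snd k) \<in> dc_aut X D d"
proof -
  note h = dc_autD[OF assms(1)] and k = dc_autD[OF assms(2)]
  have "strict_mono_on D (snd h \<circ> snd k)"
    using h(4) k(4) bij_betwE[OF k(3)] by (auto simp: strict_mono_on_def)
  then show ?thesis
    using h k bij_betwE[OF k(1)] unfolding dc_aut_def by (auto intro: bij_betw_trans)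
qed

lemma dc_aut_inv:
  assumes "h \<in> dc_aut X D d"
  shows "(inv_into UNIV (fst h), inv_into UNIV (snd h)) \<in> dc_aut X D d"
proof -
  note h = dc_autD[OF assms] and bij = dc_aut_bij[OF assms]
  have "strict_mono_on D (inv_into UNIV (snd h))"
  proof (rule strict_mono_onI)
    fix a b assume "a \<in> D" "b \<in> D" "a < b"
    with h(4) bij_betwE[OF bij_betw_inv_into_UNIV[OF bij(2) h(3)]] show "inv_into UNIV (snd h) a < inv_into UNIV (snd h) b"
      by (simp add: strict_mono_on_less[symmetric, of D "snd h"] surj_f_inv_f[OF bij_is_surj[OF bij(2)]])
  qed
  moreover have "d (inv_into UNIV (fst h) x) (inv_into UNIV (fst h) y) = inv_into UNIV (snd h) (d x y)"
    if "x \<in> X" "y \<in> X" for x y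
  proof -
    have "inv_into UNIV (fst h) x \<in> X" "inv_into UNIV (fst h) y \<in> X"
      using that bij_betwE[OF bij_betw_inv_into_UNIV[OF bij(1) h(1)]] by auto
    from h(6)[OF this] show ?thesis
      by (simp add: surj_f_inv_f[OF bij_is_surj[OF bij(1)]] inv_f_eq[OF bij_is_inj[OF bij(2)]])
  qed
  ultimately show ?thesis
    using h bij_betw_inv_into_UNIV[OF bij(1) h(1)] bij_betw_inv_into_UNIV[OF bij(2) h(3)] unfolding dc_aut_def
    by (auto intro: inv_f_eq[OF bij_is_inj[OF bij(1)]] inv_f_eq[OF bij_is_inj[OF bij(2)]])
qed

lemma dc_aut_id: "(id, id) \<in> dc_aut X D d"
  unfolding dc_aut_def by (auto simp: strict_mono_on_def)

lemma group_aut_group: "group (aut_group X D d)"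
proof (rule groupI)
  fix h assume "h \<in> carrier (aut_group X D d)"
  then have "h \<in> dc_aut X D d" by (simp add: aut_group_def)
  with dc_aut_inv[OF this] dc_aut_bij[OF this]
  show "\<exists>k\<in>carrier (aut_group X D d). k \<otimes>\<^bsub>aut_group X D d\<^esub> h = \<one>\<^bsub>aut_group X D d\<^esub>"
    by (intro bexI[of _ "(inv_into UNIV (fst h), inv_into UNIV (snd h))"]) (auto simp: aut_group_def bij_is_inj)
qed (auto simp: aut_group_def dc_aut_comp dc_aut_id comp_assoc)

definition aut_basic :: "'a set \<Rightarrow> 'd::linorder set \<Rightarrow> ('a \<Rightarrow> 'a \<Rightarrow> 'd) \<Rightarrow>
    (('a \<Rightarrow> 'a) \<times> ('d \<Rightarrow> 'd)) \<Rightarrow> 'a set \<Rightarrow> 'd set \<Rightarrow> (('a \<Rightarrow> 'a) \<times> ('d \<Rightarrow> 'd)) set" where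
  "aut_basic X D d h0 F E =
     {h \<in> dc_aut X D d. (\<forall>x\<in>F. fst h x = fst h0 x) \<and> (\<forall>e\<in>E. snd h e = snd h0 e)}"

definition aut_basis :: "'a set \<Rightarrow> 'd::linorder set \<Rightarrow> ('a \<Rightarrow> 'a \<Rightarrow> 'd) \<Rightarrow>
    (('a \<Rightarrow> 'a) \<times> ('d \<Rightarrow> 'd)) set set" where
  "aut_basis X D d = {aut_basic X D d h0 F E | h0 F E.
     h0 \<in> dc_aut X D d \<and> finite F \<and> F \<subseteq> X \<and> finite E \<and> E \<subseteq> D}"

lemma aut_top_eq: "aut_top X D d = subtopology (topology_generated_by (aut_basis X D d)) (dc_aut X D d)"
  unfolding aut_top_def aut_basis_def aut_basic_def ..

lemma dc_aut_in_aut_basis: "dc_aut X D d \<in> aut_basis X D d"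
proof -
  have "aut_basic X D d (id, id) {} {} = dc_aut X D d"
    by (simp add: aut_basic_def)
  then show ?thesis
    unfolding aut_basis_def using dc_aut_id by blast
qed

lemma topspace_aut_top [simp]: "topspace (aut_top X D d) = dc_aut X D d"
  using dc_aut_in_aut_basis by (auto simp: aut_top_eq)

lemma openin_aut_top_aut_basic:
  assumes "h0 \<in> dc_aut X D d" "finite F" "F \<subseteq> X" "finite E" "E \<subseteq> D"
  shows "openin (aut_top X D d) (aut_basic X D d h0 F E)"
proof -
  have "aut_basic X D d h0 F E \<in> aut_basis X D d"
    unfolding aut_basis_def using assms by blast
  moreover have "aut_basic X D d h0 F E = aut_basic X D d h0 F E \<inter> dc_aut X D d"
    by (auto simp: aut_basic_def)
  ultimately show ?thesis
    unfolding aut_top_eq openin_subtopology by (blast intro: topology_generated_by_Basis)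
qed

lemma continuous_map_into_aut_top:
  assumes "\<And>t. t \<in> topspace T \<Longrightarrow> f t \<in> dc_aut X D d"
    and "\<And>h0 F E. h0 \<in> dc_aut X D d \<Longrightarrow> finite F \<Longrightarrow> F \<subseteq> X \<Longrightarrow> finite E \<Longrightarrow> E \<subseteq> D \<Longrightarrow>
        openin T {t \<in> topspace T. f t \<in> aut_basic X D d h0 F E}"
  shows "continuous_map T (aut_top X D d) f"
  unfolding aut_top_eq
proof (rule continuous_map_into_subtopology)
  show "continuous_map T (topology_generated_by (aut_basis X D d)) f"
  proof (rule continuous_on_generated_topo)
    fix B assume "B \<in> aut_basis X D d"
    then obtain h0 F E where "B = aut_basic X D d h0 F E" "h0 \<in> dc_aut X D d"
      "finite F" "F \<subseteq> X" "finite E" "E \<subseteq> D"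
      unfolding aut_basis_def by blast
    with assms(2) show "openin T (f -` B \<inter> topspace T)"
      by (simp add: Int_commute Collect_conj_eq vimage_def Collect_mem_eq)
  qed (use assms(1) dc_aut_in_aut_basis in blast)
qed (use assms(1) in auto)

lemma aut_basic_eq_sum:
  "aut_basic X D d h0 F E =
     {h \<in> dc_aut X D d. \<forall>p\<in>F <+> E. map_sum (fst h) (snd h) p = map_sum (fst h0) (snd h0) p}"
  by (simp add: aut_basic_def Plus_def ball_Un)

lemma dc_aut_eqI:
  assumes "h \<in> dc_aut X D d" "k \<in> dc_aut X D d"
    and "\<And>p. p \<in> X <+> D \<Longrightarrow> map_sum (fst h) (snd h) p = map_sum (fst k) (snd k) p"
  shows "h = k"
proof -
  have "fst h x = fst k x" for x
    using assms(3)[of "Inl x"] dc_autD(2)[OF assms(1)] dc_autD(2)[OF assms(2)] by (cases "x \<in> X") auto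
  moreover have "snd h e = snd k e" for e
    using assms(3)[of "Inr e"] dc_autD(5)[OF assms(1)] dc_autD(5)[OF assms(2)] by (cases "e \<in> D") auto
  ultimately show ?thesis
    by (simp add: prod_eq_iff fun_eq_iff)
qed

section \<open>Back and forth between rational Urysohn ultrametric spaces\<close>

lemma tsum_spaceD:
  assumes "tsum_space X D z d" "x \<in> X" "y \<in> X"
  shows "d x y \<in> D" "z \<le> d x y" "d x y = d y x" "d x y = z \<longleftrightarrow> x = y" "d x x = z"
    "w \<in> X \<Longrightarrow> d x w \<le> max (d x y) (d y w)"
  using assms unfolding tsum_space_def by blast+

definition one_point_extension_property :: "'u set \<Rightarrow> ('u \<Rightarrow> 'u \<Rightarrow> rat) \<Rightarrow> bool" where
  "one_point_extension_property U dU \<longleftrightarrow>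
     (\<forall>A (r :: 'u \<Rightarrow> rat). finite A \<and> A \<subseteq> U \<and> (\<forall>a\<in>A. 0 < r a) \<and>
        (\<forall>a\<in>A. \<forall>b\<in>A. dU a b \<le> max (r a) (r b) \<and> r a \<le> max (dU a b) (r b))
        \<longrightarrow> (\<exists>u\<in>U. \<forall>a\<in>A. dU u a = r a))"

lemma rat_urysohn_ultrametric_iff:
  "rat_urysohn_ultrametric U dU \<longleftrightarrow>
     tsum_space U {q. 0 \<le> q} 0 dU \<and> countable U \<and> one_point_extension_property U dU"
  unfolding rat_urysohn_ultrametric_def countable_tsum_space_def one_point_extension_property_def
  by auto

definition finite_partial_isometry ::
    "'x set \<Rightarrow> 'y set \<Rightarrow> ('x \<Rightarrow> 'x \<Rightarrow> 'd) \<Rightarrow> ('y \<Rightarrow> 'y \<Rightarrow> 'd) \<Rightarrow> ('x \<times> 'y) set \<Rightarrow> bool" where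
  "finite_partial_isometry S T dS dT P \<longleftrightarrow>
     P \<subseteq> S \<times> T \<and> finite P \<and> (\<forall>a b a' b'. (a, b) \<in> P \<longrightarrow> (a', b') \<in> P \<longrightarrow> dT b b' = dS a a')"

lemma finite_partial_isometry_converse:
  "finite_partial_isometry S T dS dT P \<Longrightarrow> finite_partial_isometry T S dT dS (P\<inverse>)"
  unfolding finite_partial_isometry_def by auto

lemma finite_partial_isometry_insert:
  assumes S: "tsum_space S D z dS" and T: "tsum_space T D z dT"
    and P: "finite_partial_isometry S T dS dT P" and "s \<in> S" "t \<in> T"
    and dist: "\<And>a b. (a, b) \<in> P \<Longrightarrow> dT t b = dS s a"
  shows "finite_partial_isometry S T dS dT (insert (s, t) P)"
proof -
  have "dT b t = dS a s" if "(a, b) \<in> P" for a b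
    using dist[OF that] P that tsum_spaceD(3)[OF S \<open>s \<in> S\<close>] tsum_spaceD(3)[OF T \<open>t \<in> T\<close>]
    unfolding finite_partial_isometry_def by auto
  with assms tsum_spaceD(5)[OF S \<open>s \<in> S\<close>] tsum_spaceD(5)[OF T \<open>t \<in> T\<close>] show ?thesis
    unfolding finite_partial_isometry_def by auto
qed

lemma finite_partial_isometry_left_unique:
  assumes S: "tsum_space S D z dS" and T: "tsum_space T D z dT"
    and P: "finite_partial_isometry S T dS dT P" and "(a, b) \<in> P" "(a', b) \<in> P"
  shows "a = a'"
proof -
  have "a \<in> S" "a' \<in> S" "b \<in> T"
    using P assms(4,5) unfolding finite_partial_isometry_def by auto
  moreover have "dT b b = dS a a'"
    using P assms(4,5) unfolding finite_partial_isometry_def by blast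
  ultimately show ?thesis
    using tsum_spaceD(4)[OF S, of a a'] tsum_spaceD(5)[OF T, of b b] by simp
qed

lemma tsum_space_dist_compatible:
  assumes S: "tsum_space S D z dS" and "s \<in> S" "a \<in> S" "a' \<in> S"
  shows "dS a a' \<le> max (dS s a) (dS s a')" "dS s a \<le> max (dS a a') (dS s a')"
  using tsum_spaceD(6)[OF S \<open>a \<in> S\<close> \<open>s \<in> S\<close> \<open>a' \<in> S\<close>] tsum_spaceD(6)[OF S \<open>s \<in> S\<close> \<open>a' \<in> S\<close> \<open>a \<in> S\<close>]
    tsum_spaceD(3)[OF S \<open>a \<in> S\<close> \<open>s \<in> S\<close>] tsum_spaceD(3)[OF S \<open>a \<in> S\<close> \<open>a' \<in> S\<close>]
  by (simp_all add: max.commute)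

lemma finite_partial_isometry_forth:
  assumes S: "tsum_space S {q. 0 \<le> q} 0 dS" and T: "tsum_space T {q. 0 \<le> q} 0 dT"
    and ext: "one_point_extension_property T dT"
    and P: "finite_partial_isometry S T dS dT P" and "s \<in> S"
  shows "\<exists>t\<in>T. finite_partial_isometry S T dS dT (insert (s, t) P)"
proof (cases "s \<in> Domain P")
  case True
  then obtain t where "(s, t) \<in> P" by blast
  with P have "t \<in> T" "insert (s, t) P = P"
    unfolding finite_partial_isometry_def by auto
  with P show ?thesis by (intro bexI[of _ t]) simp_all
next
  case False
  have PST: "P \<subseteq> S \<times> T" "finite P"
    and Pdist: "\<And>a b a' b'. (a, b) \<in> P \<Longrightarrow> (a', b') \<in> P \<Longrightarrow> dT b b' = dS a a'"
    using P unfolding finite_partial_isometry_def by auto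
  define pre where "pre b = (SOME a. (a, b) \<in> P)" for b
  have pre: "pre b = a" if "(a, b) \<in> P" for a b
    unfolding pre_def using that finite_partial_isometry_left_unique[OF S T P]
    by (blast intro: some_equality)
  have "\<exists>t\<in>T. \<forall>b\<in>Range P. dT t b = dS s (pre b)"
  proof (rule ext[unfolded one_point_extension_property_def, rule_format], intro conjI ballI)
    show "finite (Range P)" "Range P \<subseteq> T"
      using PST by (auto simp: Range_snd)
  next
    fix b assume "b \<in> Range P"
    then obtain a where "(a, b) \<in> P" by blast
    with False PST tsum_spaceD(2,4)[OF S \<open>s \<in> S\<close>, of a] show "0 < dS s (pre b)"
      unfolding pre[OF \<open>(a, b) \<in> P\<close>] by force
  next
    fix b b' assume "b \<in> Range P" "b' \<in> Range P"
    then obtain a a' where ab: "(a, b) \<in> P" "(a', b') \<in> P" by blast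
    with PST have "a \<in> S" "a' \<in> S" by auto
    with tsum_space_dist_compatible[OF S \<open>s \<in> S\<close>]
    show "dT b b' \<le> max (dS s (pre b)) (dS s (pre b'))" "dS s (pre b) \<le> max (dT b b') (dS s (pre b'))"
      unfolding pre[OF ab(1)] pre[OF ab(2)] Pdist[OF ab] by blast+
  qed
  then obtain t where "t \<in> T" "\<And>a b. (a, b) \<in> P \<Longrightarrow> dT t b = dS s a"
    by (metis Range.intros pre)
  with finite_partial_isometry_insert[OF S T P \<open>s \<in> S\<close>] show ?thesis
    by blast
qed

lemma finite_partial_isometry_back:
  assumes S: "tsum_space S {q. 0 \<le> q} 0 dS" and T: "tsum_space T {q. 0 \<le> q} 0 dT"
    and ext: "one_point_extension_property S dS"
    and P: "finite_partial_isometry S T dS dT P" and "t \<in> T"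
  shows "\<exists>s\<in>S. finite_partial_isometry S T dS dT (insert (s, t) P)"
proof -
  obtain s where "s \<in> S" "finite_partial_isometry T S dT dS (insert (t, s) (P\<inverse>))"
    using finite_partial_isometry_forth[OF T S ext finite_partial_isometry_converse[OF P] \<open>t \<in> T\<close>]
    by blast
  moreover have "(insert (t, s) (P\<inverse>))\<inverse> = insert (s, t) P" by auto
  ultimately show ?thesis
    using finite_partial_isometry_converse by fastforce
qed

lemma isometric_relation_imp_isometry:
  assumes S: "tsum_space S D z dS" and T: "tsum_space T D z dT"
    and R: "R \<subseteq> S \<times> T" "Domain R = S" "Range R = T"
    and dist: "\<And>a b a' b'. (a, b) \<in> R \<Longrightarrow> (a', b') \<in> R \<Longrightarrow> dT b b' = dS a a'"
  shows "\<exists>\<psi>. bij_betw \<psi> S T \<and> (\<forall>x\<in>S. \<forall>y\<in>S. dT (\<psi> x) (\<psi> y) = dS x y)"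
proof -
  define \<psi> where "\<psi> x = (SOME t. (x, t) \<in> R)" for x
  have graph: "(x, \<psi> x) \<in> R" if "x \<in> S" for x
    unfolding \<psi>_def using that R(2) by (auto intro: someI)
  have iso: "dT (\<psi> x) (\<psi> y) = dS x y" if "x \<in> S" "y \<in> S" for x y
    using dist[OF graph[OF that(1)] graph[OF that(2)]] .
  have "inj_on \<psi> S"
  proof (rule inj_onI)
    fix x y assume "x \<in> S" "y \<in> S" "\<psi> x = \<psi> y"
    moreover have "\<psi> x \<in> T" using graph R(1) \<open>x \<in> S\<close> by blast
    ultimately show "x = y"
      using iso[of x y] tsum_spaceD(5)[OF T, of "\<psi> x" "\<psi> x"] tsum_spaceD(4)[OF S, of x y] by simp
  qed
  moreover have "\<psi> ` S = T"
  proof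
    show "\<psi> ` S \<subseteq> T" using graph R(1) by blast
    show "T \<subseteq> \<psi> ` S"
    proof
      fix t assume "t \<in> T"
      then obtain s where "(s, t) \<in> R" using R(3) by blast
      then have "s \<in> S" using R(1) by blast
      with graph R(1) have "\<psi> s \<in> T" by blast
      have "dT t (\<psi> s) = z"
        using dist[OF \<open>(s, t) \<in> R\<close> graph[OF \<open>s \<in> S\<close>]] tsum_spaceD(5)[OF S \<open>s \<in> S\<close> \<open>s \<in> S\<close>] by simp
      with tsum_spaceD(4)[OF T \<open>t \<in> T\<close> \<open>\<psi> s \<in> T\<close>] \<open>s \<in> S\<close> show "t \<in> \<psi> ` S" by blast
    qed
  qed
  ultimately show ?thesis
    using iso unfolding bij_betw_def by blast
qed

lemma one_point_extension_property_nonempty: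
  "one_point_extension_property U dU \<Longrightarrow> U \<noteq> {}"
  unfolding one_point_extension_property_def by (metis empty_iff empty_subsetI finite.emptyI)

lemma back_and_forth_chain:
  assumes S: "tsum_space S {q. 0 \<le> q} 0 dS" "one_point_extension_property S dS"
    and T: "tsum_space T {q. 0 \<le> q} 0 dT" "one_point_extension_property T dT"
    and st: "\<And>n. s n \<in> S" "\<And>n. t n \<in> T"
  obtains Ps where "\<And>n. finite_partial_isometry S T dS dT (Ps n)" "\<And>n. Ps n \<subseteq> Ps (Suc n)"
    "\<And>n. s n \<in> Domain (Ps (Suc n))" "\<And>n. t n \<in> Range (Ps (Suc n))"
proof -
  have "\<exists>Ps. \<forall>n. finite_partial_isometry S T dS dT (Ps n) \<and>
      Ps n \<subseteq> Ps (Suc n) \<and> s n \<in> Domain (Ps (Suc n)) \<and> t n \<in> Range (Ps (Suc n))"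
  proof (rule dependent_nat_choice)
    show "\<exists>P. finite_partial_isometry S T dS dT P"
      by (rule exI[of _ "{}"]) (simp add: finite_partial_isometry_def)
  next
    fix P n assume "finite_partial_isometry S T dS dT P"
    then obtain t' where "finite_partial_isometry S T dS dT (insert (s n, t') P)"
      using finite_partial_isometry_forth[OF S(1) T] st by blast
    then obtain s' where "finite_partial_isometry S T dS dT (insert (s', t n) (insert (s n, t') P))"
      using finite_partial_isometry_back[OF S(1) T(1) S(2)] st by blast
    then show "\<exists>P'. finite_partial_isometry S T dS dT P' \<and>
        P \<subseteq> P' \<and> s n \<in> Domain P' \<and> t n \<in> Range P'"
      by blast
  qed
  with that show ?thesis
    by blast
qed

lemma isometric_Union_chain:
  assumes Ps: "\<And>n. finite_partial_isometry S T dS dT (Ps n)" and mono: "\<And>n. Ps n \<subseteq> Ps (Suc n)"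
    and "(a, b) \<in> (\<Union>n. Ps n)" "(a', b') \<in> (\<Union>n. Ps n)"
  shows "dT b b' = dS a a'"
proof -
  obtain m n where "(a, b) \<in> Ps m" "(a', b') \<in> Ps n"
    using assms(3,4) by blast
  then have "(a, b) \<in> Ps (max m n)" "(a', b') \<in> Ps (max m n)"
    using lift_Suc_mono_le[of Ps, OF mono] by (meson max.cobounded1 max.cobounded2 subsetD)+
  with Ps[of "max m n"] show ?thesis
    unfolding finite_partial_isometry_def by blast
qed

theorem rat_urysohn_ultrametric_isometric:
  assumes "rat_urysohn_ultrametric S dS" "rat_urysohn_ultrametric T dT"
  shows "\<exists>\<psi>. bij_betw \<psi> S T \<and> (\<forall>x\<in>S. \<forall>y\<in>S. dT (\<psi> x) (\<psi> y) = dS x y)"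
proof -
  have S: "tsum_space S {q. 0 \<le> q} 0 dS" "countable S" "one_point_extension_property S dS"
    and T: "tsum_space T {q. 0 \<le> q} 0 dT" "countable T" "one_point_extension_property T dT"
    using assms unfolding rat_urysohn_ultrametric_iff by auto
  define s t where "s = from_nat_into S" and "t = from_nat_into T"
  have "s n \<in> S" "t n \<in> T" for n
    unfolding s_def t_def using S(3) T(3) by (simp_all add: from_nat_into one_point_extension_property_nonempty)
  then obtain Ps where Ps: "\<And>n. finite_partial_isometry S T dS dT (Ps n)" "\<And>n. Ps n \<subseteq> Ps (Suc n)"
    and total: "\<And>n. s n \<in> Domain (Ps (Suc n))" "\<And>n. t n \<in> Range (Ps (Suc n))"
    using back_and_forth_chain[OF S(1,3) T(1,3)] by blast
  have R: "(\<Union>n. Ps n) \<subseteq> S \<times> T"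
    using Ps(1) unfolding finite_partial_isometry_def by blast
  have "S \<subseteq> Domain (\<Union>n. Ps n)"
  proof
    fix x assume "x \<in> S"
    then obtain n where "s n = x" using from_nat_into_surj[OF S(2)] unfolding s_def by blast
    with total(1)[of n] show "x \<in> Domain (\<Union>n. Ps n)" by blast
  qed
  moreover have "T \<subseteq> Range (\<Union>n. Ps n)"
  proof
    fix y assume "y \<in> T"
    then obtain n where "t n = y" using from_nat_into_surj[OF T(2)] unfolding t_def by blast
    with total(2)[of n] show "y \<in> Range (\<Union>n. Ps n)" by blast
  qed
  ultimately have "Domain (\<Union>n. Ps n) = S" "Range (\<Union>n. Ps n) = T"
    using R by blast+
  with R show ?thesis
    by (rule isometric_relation_imp_isometry[OF S(1) T(1) _ _ _ isometric_Union_chain[of S T dS dT Ps, OF Ps]])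
qed

section \<open>Words: a model of the rational Urysohn ultrametric space\<close>

definition urysohn_model :: "'w set \<Rightarrow> (rat \<rightharpoonup> 'w) set" where
  "urysohn_model W = {v. finite (dom v) \<and> dom v \<subseteq> {0<..} \<and> ran v \<subseteq> W}"

definition model_dist :: "(rat \<rightharpoonup> 'w) \<Rightarrow> (rat \<rightharpoonup> 'w) \<Rightarrow> rat" where
  "model_dist v v' = (if v = v' then 0 else Max {q. v q \<noteq> v' q})"

lemma urysohn_model_diff:
  assumes "v \<in> urysohn_model W" "v' \<in> urysohn_model W"
  shows "finite {q. v q \<noteq> v' q}" "{q. v q \<noteq> v' q} \<subseteq> {0<..}"
proof -
  have "{q. v q \<noteq> v' q} \<subseteq> dom v \<union> dom v'"
    by auto
  with assms show "finite {q. v q \<noteq> v' q}" "{q. v q \<noteq> v' q} \<subseteq> {0<..}"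
    unfolding urysohn_model_def by (blast intro: finite_subset)+
qed

lemma model_dist_ge:
  "v \<in> urysohn_model W \<Longrightarrow> v' \<in> urysohn_model W \<Longrightarrow> v q \<noteq> v' q \<Longrightarrow> q \<le> model_dist v v'"
  unfolding model_dist_def using urysohn_model_diff(1) by (auto intro: Max_ge)

lemma model_dist_differs:
  assumes "v \<in> urysohn_model W" "v' \<in> urysohn_model W" "v \<noteq> v'"
  shows "v (model_dist v v') \<noteq> v' (model_dist v v')"
proof -
  have "{q. v q \<noteq> v' q} \<noteq> {}"
    using assms(3) by auto
  with Max_in[OF urysohn_model_diff(1)[OF assms(1,2)]] assms(3) show ?thesis
    unfolding model_dist_def by auto
qed

lemma model_dist_pos:
  "v \<in> urysohn_model W \<Longrightarrow> v' \<in> urysohn_model W \<Longrightarrow> v \<noteq> v' \<Longrightarrow> 0 < model_dist v v'"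
  using model_dist_differs urysohn_model_diff(2) by blast

lemma model_dist_eqI:
  assumes "v \<in> urysohn_model W" "v' \<in> urysohn_model W"
    and "v m \<noteq> v' m" "\<And>q. v q \<noteq> v' q \<Longrightarrow> q \<le> m"
  shows "model_dist v v' = m"
proof -
  have "v \<noteq> v'"
    using assms(3) by auto
  with assms show ?thesis
    using model_dist_ge[OF assms(1,2)] model_dist_differs[OF assms(1,2)] by (meson order_antisym)
qed

lemma model_dist_sym: "model_dist v v' = model_dist v' v"
proof -
  have "{q. v q \<noteq> v' q} = {q. v' q \<noteq> v q}"
    by auto
  then show ?thesis
    unfolding model_dist_def by auto
qed

lemma model_dist_ultra:
  assumes "u \<in> urysohn_model W" "v \<in> urysohn_model W" "w \<in> urysohn_model W"
  shows "model_dist u w \<le> max (model_dist u v) (model_dist v w)"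
proof (cases "u = w")
  case True
  then show ?thesis
    using model_dist_pos[OF assms(1,2)] by (auto simp: model_dist_def)
next
  case False
  then have "u (model_dist u w) \<noteq> v (model_dist u w) \<or> v (model_dist u w) \<noteq> w (model_dist u w)"
    using model_dist_differs[OF assms(1,3)] by auto
  then show ?thesis
    using model_dist_ge[OF assms(1,2)] model_dist_ge[OF assms(2,3)] by (meson le_max_iff_disj)
qed

lemma tsum_space_urysohn_model: "tsum_space (urysohn_model W) {q. 0 \<le> q} 0 model_dist"
  unfolding tsum_space_def
proof (intro conjI ballI)
  fix v v' assume v: "v \<in> urysohn_model W" "v' \<in> urysohn_model W"
  show "model_dist v v' \<in> {q. 0 \<le> q}" "model_dist v v' = 0 \<longleftrightarrow> v = v'"
    using model_dist_pos[OF v] by (cases "v = v'"; simp add: model_dist_def)+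
  show "model_dist v v' = model_dist v' v"
    by (rule model_dist_sym)
  show "model_dist v w \<le> max (model_dist v v') (model_dist v' w)" if "w \<in> urysohn_model W" for w
    using v that by (rule model_dist_ultra)
qed auto

definition model_graft :: "(rat \<rightharpoonup> 'w) \<Rightarrow> rat \<Rightarrow> 'w \<Rightarrow> (rat \<rightharpoonup> 'w)" where
  "model_graft v r w = (\<lambda>q. if r < q then v q else if q = r then Some w else None)"

lemma model_graft_in:
  assumes "v \<in> urysohn_model W" "0 < r" "w \<in> W"
  shows "model_graft v r w \<in> urysohn_model W"
proof -
  have "dom (model_graft v r w) \<subseteq> insert r (dom v)" "ran (model_graft v r w) \<subseteq> insert w (ran v)"
    by (auto simp: model_graft_def dom_def ran_def split: if_splits)
  with assms show ?thesis
    unfolding urysohn_model_def by (auto intro: finite_subset)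
qed

lemma model_dist_graft:
  assumes v: "v \<in> urysohn_model W" and a: "a \<in> urysohn_model W"
    and "0 < r" "w \<in> W" "a r \<noteq> Some w"
  shows "model_dist (model_graft v r w) a = max (model_dist v a) r"
proof (rule model_dist_eqI[OF model_graft_in[OF v \<open>0 < r\<close> \<open>w \<in> W\<close>] a])
  show "model_graft v r w (max (model_dist v a) r) \<noteq> a (max (model_dist v a) r)"
  proof (cases "r < model_dist v a")
    case True
    then have "v \<noteq> a"
      using \<open>0 < r\<close> by (auto simp: model_dist_def)
    with True model_dist_differs[OF v a] show ?thesis
      by (simp add: model_graft_def)
  qed (use \<open>a r \<noteq> Some w\<close> in \<open>simp add: model_graft_def max_def\<close>)
  show "q \<le> max (model_dist v a) r" if "model_graft v r w q \<noteq> a q" for q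
    using that model_dist_ge[OF v a, of q] by (auto simp: model_graft_def split: if_splits)
qed

lemma one_point_extension_urysohn_model:
  assumes "infinite W"
  shows "one_point_extension_property (urysohn_model W) model_dist"
  unfolding one_point_extension_property_def
proof (intro allI impI, elim conjE)
  fix A r
  assume A: "finite A" "A \<subseteq> urysohn_model W" and r: "\<forall>a\<in>A. 0 < r a"
    and compatible: "\<forall>a\<in>A. \<forall>b\<in>A. model_dist a b \<le> max (r a) (r b) \<and> r a \<le> max (model_dist a b) (r b)"
  show "\<exists>u\<in>urysohn_model W. \<forall>a\<in>A. model_dist u a = r a"
  proof (cases "A = {}")
    case True
    have "Map.empty \<in> urysohn_model W"
      by (simp add: urysohn_model_def)
    with True show ?thesis by blast
  next
    case False
    obtain a0 where a0: "a0 \<in> A" "\<And>a. a \<in> A \<Longrightarrow> r a0 \<le> r a"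
      using arg_min_if_finite(1)[OF A(1) False, of r] arg_min_least[OF A(1) False, of _ r] by blast
    have "finite (\<Union>a\<in>A. ran a)"
      using A finite_ran unfolding urysohn_model_def by blast
    then have "infinite (W - (\<Union>a\<in>A. ran a))"
      using assms by (rule Diff_infinite_finite)
    then obtain w where "w \<in> W" "\<And>a. a \<in> A \<Longrightarrow> w \<notin> ran a"
      using infinite_imp_nonempty by blast
    then have fresh: "\<And>a. a \<in> A \<Longrightarrow> a (r a0) \<noteq> Some w"
      by (meson ranI)
    \<comment> \<open>Copy a point with the least prescribed distance above that distance and put a fresh letter at it.\<close>
    have "model_dist (model_graft a0 (r a0) w) a = r a" if "a \<in> A" for a
    proof -
      have "model_dist (model_graft a0 (r a0) w) a = max (model_dist a0 a) (r a0)"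
        using A a0(1) that r \<open>w \<in> W\<close> fresh by (intro model_dist_graft) auto
      also have "\<dots> = r a"
        using compatible[rule_format, OF that a0(1)] a0(2)[OF that] model_dist_sym[of a a0]
        by (auto simp: max_def)
      finally show ?thesis .
    qed
    moreover have "model_graft a0 (r a0) w \<in> urysohn_model W"
      using A a0(1) r \<open>w \<in> W\<close> by (intro model_graft_in) auto
    ultimately show ?thesis by blast
  qed
qed

lemma countable_urysohn_model:
  assumes "countable W"
  shows "countable (urysohn_model W)"
proof -
  have inj: "inj (Map.graph :: (rat \<rightharpoonup> 'w) \<Rightarrow> _)"
  proof (rule injI)
    fix v v' :: "rat \<rightharpoonup> 'w" assume "Map.graph v = Map.graph v'"
    then have "v q = Some w \<longleftrightarrow> v' q = Some w" for q w
      unfolding Map.graph_def by (auto simp: set_eq_iff)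
    then show "v = v'"
      by (metis not_Some_eq ext)
  qed
  have "Map.graph ` urysohn_model W \<subseteq> {G. finite G \<and> G \<subseteq> UNIV \<times> W}"
    using graph_ranD unfolding urysohn_model_def by fastforce
  moreover have "countable {G. finite G \<and> G \<subseteq> (UNIV :: rat set) \<times> W}"
    using assms by (intro countable_Collect_finite_subset) auto
  ultimately have "countable (Map.graph ` urysohn_model W)"
    by (rule countable_subset)
  then show ?thesis
    using inj_on_subset[OF inj subset_UNIV] by (rule countable_image_inj_on)
qed

lemma rat_urysohn_ultrametric_urysohn_model:
  "countable W \<Longrightarrow> infinite W \<Longrightarrow> rat_urysohn_ultrametric (urysohn_model W) model_dist"
  unfolding rat_urysohn_ultrametric_iff
  using tsum_space_urysohn_model countable_urysohn_model one_point_extension_urysohn_model by blast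

definition model_map :: "('w \<Rightarrow> 'w') \<Rightarrow> (rat \<rightharpoonup> 'w) \<Rightarrow> (rat \<rightharpoonup> 'w')" where
  "model_map \<sigma> v = map_option \<sigma> \<circ> v"

lemma model_map_comp: "model_map (\<sigma> \<circ> \<tau>) v = model_map \<sigma> (model_map \<tau> v)"
  by (simp add: model_map_def fun_eq_iff option.map_comp)

lemma model_map_cong:
  assumes "\<And>w. w \<in> ran v \<Longrightarrow> \<sigma> w = \<tau> w"
  shows "model_map \<sigma> v = model_map \<tau> v"
proof
  fix q show "model_map \<sigma> v q = model_map \<tau> v q"
    using assms by (cases "v q") (simp_all add: model_map_def ranI)
qed

lemma model_map_in:
  assumes "\<sigma> ` W \<subseteq> W'" "v \<in> urysohn_model W"
  shows "model_map \<sigma> v \<in> urysohn_model W'"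
proof -
  have "ran (model_map \<sigma> v) = \<sigma> ` ran v"
    by (force simp: model_map_def ran_def)
  moreover have "dom (model_map \<sigma> v) = dom v"
    by (simp add: model_map_def)
  ultimately show ?thesis
    using assms image_mono[of "ran v" W \<sigma>] unfolding urysohn_model_def by auto
qed

lemma model_dist_model_map:
  assumes "inj_on \<sigma> W" "v \<in> urysohn_model W" "v' \<in> urysohn_model W"
  shows "model_dist (model_map \<sigma> v) (model_map \<sigma> v') = model_dist v v'"
proof -
  have "model_map \<sigma> v q = model_map \<sigma> v' q \<longleftrightarrow> v q = v' q" for q
  proof
    assume "model_map \<sigma> v q = model_map \<sigma> v' q"
    then have "map_option \<sigma> (v q) = map_option \<sigma> (v' q)"
      by (simp add: model_map_def)
    moreover have "set_option (v q) \<subseteq> W" "set_option (v' q) \<subseteq> W"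
      using assms(2,3) by (auto simp: urysohn_model_def ran_def)
    ultimately show "v q = v' q"
      using assms(1) by (intro option.inj_map_strong[of "v q" "v' q" \<sigma> \<sigma>]) (auto dest: inj_onD)
  qed (simp add: model_map_def)
  then show ?thesis
    unfolding model_dist_def by (simp add: fun_eq_iff)
qed

lemma bij_betw_model_map:
  assumes "bij_betw \<sigma> W W"
  shows "bij_betw (model_map \<sigma>) (urysohn_model W) (urysohn_model W)"
proof -
  have inv: "bij_betw (inv_into W \<sigma>) W W"
    using assms by (rule bij_betw_inv_into)
  have model_map_id: "model_map id v = v" for v :: "rat \<rightharpoonup> 'w"
    by (simp add: model_map_def option.map_id0)
  have ran: "w \<in> W" if "v \<in> urysohn_model W" "w \<in> ran v" for v w
    using that by (auto simp: urysohn_model_def)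
  have "model_map (inv_into W \<sigma>) (model_map \<sigma> v) = v" if "v \<in> urysohn_model W" for v
    unfolding model_map_comp[symmetric]
    using model_map_cong[of v "inv_into W \<sigma> \<circ> \<sigma>" id] ran[OF that] assms
    by (simp add: bij_betw_inv_into_left model_map_id)
  moreover have "model_map \<sigma> (model_map (inv_into W \<sigma>) v) = v" if "v \<in> urysohn_model W" for v
    unfolding model_map_comp[symmetric]
    using model_map_cong[of v "\<sigma> \<circ> inv_into W \<sigma>" id] ran[OF that] assms
    by (simp add: bij_betw_inv_into_right model_map_id)
  moreover have "model_map \<sigma> ` urysohn_model W \<subseteq> urysohn_model W"
    "model_map (inv_into W \<sigma>) ` urysohn_model W \<subseteq> urysohn_model W"
    using model_map_in[of _ W W] bij_betw_imp_surj_on[OF assms] bij_betw_imp_surj_on[OF inv]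
    by (simp_all add: image_subsetI)
  ultimately show ?thesis
    by (intro bij_betw_byWitness[where f' = "model_map (inv_into W \<sigma>)"]) auto
qed

section \<open>Automorphisms acting on words\<close>

lemma bij_betw_map_sum:
  assumes "bij_betw f A A'" "bij_betw g B B'"
  shows "bij_betw (map_sum f g) (A <+> B) (A' <+> B')"
proof -
  have "inj_on (map_sum f g) (A <+> B)"
  proof (rule inj_onI)
    fix p q assume "p \<in> A <+> B" "q \<in> A <+> B" "map_sum f g p = map_sum f g q"
    with assms show "p = q"
      by (elim PlusE) (auto simp: bij_betw_def dest: inj_onD)
  qed
  moreover have "map_sum f g ` (A <+> B) = A' <+> B'"
  proof -
    have "map_sum f g ` (A <+> B) = f ` A <+> g ` B"
      unfolding Plus_def by (simp add: image_Un image_image)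
    with assms show ?thesis
      by (simp add: bij_betw_imp_surj_on)
  qed
  ultimately show ?thesis
    unfolding bij_betw_def ..
qed

lemma dc_aut_map_sum:
  "h \<in> dc_aut X D d \<Longrightarrow> bij_betw (map_sum (fst h) (snd h)) (X <+> D) (X <+> D)"
  using bij_betw_map_sum dc_autD(1,3) by metis

lemma subset_Plus_vimage: "L \<subseteq> Inl -` L <+> Inr -` L"
proof
  fix p assume "p \<in> L"
  then show "p \<in> Inl -` L <+> Inr -` L" by (cases p) auto
qed

definition letter_perm :: "('a \<Rightarrow> 'a) \<times> ('d \<Rightarrow> 'd) \<Rightarrow> ('a + 'd) \<times> nat \<Rightarrow> ('a + 'd) \<times> nat" where
  "letter_perm h = map_prod (map_sum (fst h) (snd h)) id"

lemma letter_perm_comp: "letter_perm (fst h \<circ> fst k, snd h \<circ> snd k) = letter_perm h \<circ> letter_perm k"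
  by (simp add: letter_perm_def fun_eq_iff sum.map_comp)

lemma bij_betw_letter_perm:
  "h \<in> dc_aut X D d \<Longrightarrow> bij_betw (letter_perm h) ((X <+> D) \<times> UNIV) ((X <+> D) \<times> UNIV)"
  unfolding letter_perm_def using dc_aut_map_sum bij_betw_id by (rule bij_betw_map_prod)

definition letter_word :: "'l \<Rightarrow> rat \<rightharpoonup> 'l \<times> nat" where
  "letter_word p = [1 \<mapsto> (p, 0)]"

lemma letter_word_in: "p \<in> L \<Longrightarrow> letter_word p \<in> urysohn_model (L \<times> UNIV)"
  by (simp add: letter_word_def urysohn_model_def)

lemma letter_word_inject: "letter_word p = letter_word p' \<longleftrightarrow> p = p'"
  by (auto simp: letter_word_def fun_eq_iff)

lemma model_map_letter_perm_letter_word: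
  "model_map (letter_perm h) (letter_word p) = letter_word (map_sum (fst h) (snd h) p)"
  by (simp add: model_map_def letter_word_def letter_perm_def fun_eq_iff)

locale urysohn_coding =
  fixes X :: "'a set" and D :: "'d::linorder set" and d :: "'a \<Rightarrow> 'a \<Rightarrow> 'd"
    and U :: "'u set" and dU :: "'u \<Rightarrow> 'u \<Rightarrow> rat"
    and code :: "'u \<Rightarrow> rat \<rightharpoonup> ('a + 'd) \<times> nat"
  assumes bij_code: "bij_betw code U (urysohn_model ((X <+> D) \<times> UNIV))"
    and model_dist_code: "\<And>x y. x \<in> U \<Longrightarrow> y \<in> U \<Longrightarrow> model_dist (code x) (code y) = dU x y"
begin

abbreviation model :: "(rat \<rightharpoonup> ('a + 'd) \<times> nat) set" where
  "model \<equiv> urysohn_model ((X <+> D) \<times> UNIV)"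

abbreviation decode :: "(rat \<rightharpoonup> ('a + 'd) \<times> nat) \<Rightarrow> 'u" where
  "decode \<equiv> inv_into U code"

lemma bij_decode: "bij_betw decode model U"
  using bij_code by (rule bij_betw_inv_into)

lemma code_decode: "v \<in> model \<Longrightarrow> code (decode v) = v"
  using bij_code by (rule bij_betw_inv_into_right)

lemma decode_in: "v \<in> model \<Longrightarrow> decode v \<in> U"
  by (rule bij_betw_apply[OF bij_decode])

lemma code_in: "u \<in> U \<Longrightarrow> code u \<in> model"
  by (rule bij_betw_apply[OF bij_code])

definition aut_emb :: "('a \<Rightarrow> 'a) \<times> ('d \<Rightarrow> 'd) \<Rightarrow> ('u \<Rightarrow> 'u) \<times> (rat \<Rightarrow> rat)" where
  "aut_emb h = ((\<lambda>u. if u \<in> U then decode (model_map (letter_perm h) (code u)) else u), id)"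

lemma dist_decode: "v \<in> model \<Longrightarrow> v' \<in> model \<Longrightarrow> dU (decode v) (decode v') = model_dist v v'"
  using model_dist_code[OF decode_in decode_in] by (simp add: code_decode)

lemma model_map_letter_perm_in: "h \<in> dc_aut X D d \<Longrightarrow> v \<in> model \<Longrightarrow> model_map (letter_perm h) v \<in> model"
  by (rule bij_betw_apply[OF bij_betw_model_map[OF bij_betw_letter_perm]])

lemma aut_emb_in_dc_aut:
  assumes h: "h \<in> dc_aut X D d"
  shows "aut_emb h \<in> dc_aut U {q. 0 \<le> q} dU"
proof -
  have "bij_betw (decode \<circ> (model_map (letter_perm h) \<circ> code)) U U"
    using bij_betw_trans[OF bij_code bij_betw_model_map[OF bij_betw_letter_perm[OF h]]] bij_decode
    by (rule bij_betw_trans)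
  then have "bij_betw (fst (aut_emb h)) U U"
    by (rule bij_betw_cong[THEN iffD1, rotated]) (simp add: aut_emb_def)
  moreover have "dU (fst (aut_emb h) x) (fst (aut_emb h) y) = dU x y" if "x \<in> U" "y \<in> U" for x y
  proof -
    have "dU (fst (aut_emb h) x) (fst (aut_emb h) y) =
        model_dist (model_map (letter_perm h) (code x)) (model_map (letter_perm h) (code y))"
      using that by (simp add: aut_emb_def dist_decode model_map_letter_perm_in[OF h] code_in)
    also have "\<dots> = model_dist (code x) (code y)"
      using bij_betw_imp_inj_on[OF bij_betw_letter_perm[OF h]] code_in[OF that(1)] code_in[OF that(2)]
      by (rule model_dist_model_map)
    finally show ?thesis
      using that by (simp add: model_dist_code)
  qed
  ultimately show ?thesis
    unfolding dc_aut_def by (auto simp: aut_emb_def strict_mono_on_def)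
qed

lemma aut_emb_mult:
  assumes "h \<in> dc_aut X D d" "k \<in> dc_aut X D d"
  shows "aut_emb (fst h \<circ> fst k, snd h \<circ> snd k) = (fst (aut_emb h) \<circ> fst (aut_emb k), snd (aut_emb h) \<circ> snd (aut_emb k))"
proof -
  have "model_map (letter_perm k) (code u) \<in> model" if "u \<in> U" for u
    using assms(2) code_in[OF that] by (rule model_map_letter_perm_in)
  then show ?thesis
    by (auto simp: aut_emb_def fun_eq_iff letter_perm_comp model_map_comp code_decode decode_in)
qed

lemma group_hom_aut_emb: "group_hom (aut_group X D d) (aut_group U {q. 0 \<le> q} dU) aut_emb"
proof -
  have "aut_emb \<in> hom (aut_group X D d) (aut_group U {q. 0 \<le> q} dU)"
    unfolding hom_def aut_group_def using aut_emb_in_dc_aut aut_emb_mult by auto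
  then show ?thesis
    by (simp add: group_hom_def group_hom_axioms_def group_aut_group)
qed

lemma snd_aut_emb [simp]: "snd (aut_emb h) = id"
  by (simp add: aut_emb_def)

lemma aut_emb_letter_word:
  assumes "p \<in> X <+> D"
  shows "fst (aut_emb h) (decode (letter_word p)) = decode (letter_word (map_sum (fst h) (snd h) p))"
  using letter_word_in[OF assms]
  by (simp add: aut_emb_def decode_in code_decode model_map_letter_perm_letter_word)

lemma decode_letter_word_inject:
  assumes "p \<in> X <+> D" "p' \<in> X <+> D"
  shows "decode (letter_word p) = decode (letter_word p') \<longleftrightarrow> p = p'"
  using inj_on_eq_iff[OF bij_betw_imp_inj_on[OF bij_decode] letter_word_in[OF assms(1)] letter_word_in[OF assms(2)]]
  by (simp add: letter_word_inject)

lemma aut_emb_letter_word_eq_iff: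
  assumes "h \<in> dc_aut X D d" "k \<in> dc_aut X D d" "p \<in> X <+> D"
  shows "fst (aut_emb h) (decode (letter_word p)) = fst (aut_emb k) (decode (letter_word p)) \<longleftrightarrow>
    map_sum (fst h) (snd h) p = map_sum (fst k) (snd k) p"
proof -
  have "map_sum (fst h) (snd h) p \<in> X <+> D" "map_sum (fst k) (snd k) p \<in> X <+> D"
    using bij_betw_apply[OF dc_aut_map_sum assms(3)] assms(1,2) by blast+
  then show ?thesis
    by (simp add: aut_emb_letter_word[OF assms(3)] decode_letter_word_inject)
qed

lemma inj_on_aut_emb: "inj_on aut_emb (dc_aut X D d)"
proof (rule inj_onI)
  fix h k assume "h \<in> dc_aut X D d" "k \<in> dc_aut X D d" "aut_emb h = aut_emb k"
  then show "h = k"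
    using aut_emb_letter_word_eq_iff by (metis dc_aut_eqI)
qed

lemma aut_emb_eqI:
  assumes "u \<in> U" "\<And>p n. (p, n) \<in> ran (code u) \<Longrightarrow> map_sum (fst k) (snd k) p = map_sum (fst h) (snd h) p"
  shows "fst (aut_emb k) u = fst (aut_emb h) u"
proof -
  have "model_map (letter_perm k) (code u) = model_map (letter_perm h) (code u)"
    by (rule model_map_cong) (auto simp: letter_perm_def assms(2))
  with assms(1) show ?thesis
    by (simp add: aut_emb_def)
qed

lemma aut_emb_locally_determined:
  assumes "finite F'" "F' \<subseteq> U"
  obtains F E where "finite F" "F \<subseteq> X" "finite E" "E \<subseteq> D"
    "\<And>h k u. k \<in> aut_basic X D d h F E \<Longrightarrow> u \<in> F' \<Longrightarrow> fst (aut_emb k) u = fst (aut_emb h) u"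
proof
  define L where "L = (\<Union>u\<in>F'. fst ` ran (code u))"
  have "finite L"
    using assms code_in by (auto simp: L_def urysohn_model_def finite_ran)
  moreover have "L \<subseteq> X <+> D"
    using assms code_in unfolding L_def urysohn_model_def by force
  ultimately show "finite (Inl -` L)" "Inl -` L \<subseteq> X" "finite (Inr -` L)" "Inr -` L \<subseteq> D"
    by (auto intro: finite_vimageI)
  fix h k u assume k: "k \<in> aut_basic X D d h (Inl -` L) (Inr -` L)" and "u \<in> F'"
  have "map_sum (fst k) (snd k) p = map_sum (fst h) (snd h) p" if "p \<in> L" for p
    using k subset_Plus_vimage[of L] that unfolding aut_basic_eq_sum by blast
  moreover have "p \<in> L" if "(p, n) \<in> ran (code u)" for p n
    using that \<open>u \<in> F'\<close> unfolding L_def by force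
  ultimately show "fst (aut_emb k) u = fst (aut_emb h) u"
    using \<open>u \<in> F'\<close> assms(2) by (intro aut_emb_eqI) auto
qed

lemma continuous_map_aut_emb: "continuous_map (aut_top X D d) (aut_top U {q. 0 \<le> q} dU) aut_emb"
proof (rule continuous_map_into_aut_top)
  fix k0 F' E'
  assume F': "finite F'" "F' \<subseteq> U"
  obtain F E where FE: "finite F" "F \<subseteq> X" "finite E" "E \<subseteq> D"
    and local: "\<And>h k u. k \<in> aut_basic X D d h F E \<Longrightarrow> u \<in> F' \<Longrightarrow> fst (aut_emb k) u = fst (aut_emb h) u"
    using aut_emb_locally_determined[OF F'] by blast
  show "openin (aut_top X D d) {h \<in> topspace (aut_top X D d). aut_emb h \<in> aut_basic U {q. 0 \<le> q} dU k0 F' E'}"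
    (is "openin _ ?S")
  proof (subst openin_subopen, intro ballI exI conjI)
    fix h assume h: "h \<in> ?S"
    then show "openin (aut_top X D d) (aut_basic X D d h F E)"
      by (intro openin_aut_top_aut_basic FE) simp
    show "h \<in> aut_basic X D d h F E"
      using h by (simp add: aut_basic_def)
    show "aut_basic X D d h F E \<subseteq> ?S"
    proof
      fix k assume k: "k \<in> aut_basic X D d h F E"
      then have "k \<in> dc_aut X D d"
        by (simp add: aut_basic_def)
      moreover have "fst (aut_emb k) u = fst k0 u" if "u \<in> F'" for u
        using local[OF k that] h that by (simp add: aut_basic_def)
      ultimately show "k \<in> ?S"
        using h aut_emb_in_dc_aut by (simp add: aut_basic_def)
    qed
  qed
qed (simp add: aut_emb_in_dc_aut)

lemma aut_emb_aut_basic_iff: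
  assumes "h \<in> dc_aut X D d" "h0 \<in> dc_aut X D d" "F \<subseteq> X" "E \<subseteq> D"
  shows "h \<in> aut_basic X D d h0 F E \<longleftrightarrow>
    aut_emb h \<in> aut_basic U {q. 0 \<le> q} dU (aut_emb h0) ((\<lambda>p. decode (letter_word p)) ` (F <+> E)) {}"
proof -
  have "F <+> E \<subseteq> X <+> D"
    using assms(3,4) by auto
  then have "(\<forall>p\<in>F <+> E. map_sum (fst h) (snd h) p = map_sum (fst h0) (snd h0) p) \<longleftrightarrow>
      (\<forall>p\<in>F <+> E. fst (aut_emb h) (decode (letter_word p)) = fst (aut_emb h0) (decode (letter_word p)))"
    using aut_emb_letter_word_eq_iff[OF assms(1,2)] by blast
  with assms(1) show ?thesis
    unfolding aut_basic_eq_sum[of X D d h0 F E] aut_basic_def[of U "{q. 0 \<le> q}" dU]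
    by (simp add: aut_emb_in_dc_aut)
qed

lemma continuous_map_inv_aut_emb:
  "continuous_map (subtopology (aut_top U {q. 0 \<le> q} dU) (aut_emb ` dc_aut X D d)) (aut_top X D d)
     (inv_into (dc_aut X D d) aut_emb)"
proof (rule continuous_map_into_aut_top)
  have "aut_emb ` dc_aut X D d \<subseteq> dc_aut U {q. 0 \<le> q} dU"
    using aut_emb_in_dc_aut by blast
  then have topspace: "topspace (subtopology (aut_top U {q. 0 \<le> q} dU) (aut_emb ` dc_aut X D d)) =
      aut_emb ` dc_aut X D d"
    by (simp add: Int_absorb1)
  show "inv_into (dc_aut X D d) aut_emb t \<in> dc_aut X D d"
    if "t \<in> topspace (subtopology (aut_top U {q. 0 \<le> q} dU) (aut_emb ` dc_aut X D d))" for t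
    using that unfolding topspace by (rule inv_into_into)
  fix h0 F E assume h0: "h0 \<in> dc_aut X D d" and FE: "finite F" "F \<subseteq> X" "finite E" "E \<subseteq> D"
  define F' where "F' = (\<lambda>p. decode (letter_word p)) ` (F <+> E)"
  have "openin (aut_top U {q. 0 \<le> q} dU) (aut_basic U {q. 0 \<le> q} dU (aut_emb h0) F' {})"
    using FE by (intro openin_aut_top_aut_basic aut_emb_in_dc_aut h0)
      (auto simp: F'_def intro!: decode_in letter_word_in)
  moreover have "{t \<in> aut_emb ` dc_aut X D d. inv_into (dc_aut X D d) aut_emb t \<in> aut_basic X D d h0 F E} =
      aut_emb ` dc_aut X D d \<inter> aut_basic U {q. 0 \<le> q} dU (aut_emb h0) F' {}"
    using aut_emb_aut_basic_iff[OF _ h0 FE(2,4)] inv_into_f_f[OF inj_on_aut_emb]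
    by (auto simp: F'_def)
  ultimately show "openin (subtopology (aut_top U {q. 0 \<le> q} dU) (aut_emb ` dc_aut X D d))
      {t \<in> topspace (subtopology (aut_top U {q. 0 \<le> q} dU) (aut_emb ` dc_aut X D d)).
        inv_into (dc_aut X D d) aut_emb t \<in> aut_basic X D d h0 F E}"
    unfolding topspace by (simp add: openin_subtopology_Int2)
qed

lemma embedding_map_aut_emb: "embedding_map (aut_top X D d) (aut_top U {q. 0 \<le> q} dU) aut_emb"
  unfolding embedding_map_def homeomorphic_map_maps homeomorphic_maps_def
proof (intro exI conjI ballI)
  show "continuous_map (aut_top X D d)
      (subtopology (aut_top U {q. 0 \<le> q} dU) (aut_emb ` topspace (aut_top X D d))) aut_emb"
    using continuous_map_aut_emb by (rule continuous_map_into_subtopology) simp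
  show "continuous_map (subtopology (aut_top U {q. 0 \<le> q} dU) (aut_emb ` topspace (aut_top X D d)))
      (aut_top X D d) (inv_into (dc_aut X D d) aut_emb)"
    using continuous_map_inv_aut_emb by simp
  show "inv_into (dc_aut X D d) aut_emb (aut_emb h) = h" if "h \<in> topspace (aut_top X D d)" for h
    using that inv_into_f_f[OF inj_on_aut_emb] by simp
  show "aut_emb (inv_into (dc_aut X D d) aut_emb t) = t"
    if "t \<in> topspace (subtopology (aut_top U {q. 0 \<le> q} dU) (aut_emb ` topspace (aut_top X D d)))" for t
    using that by (simp add: f_inv_into_f)
qed

end

theorem corollary4p13:
  fixes X :: "'a set" and D :: "'d::linorder set" and z :: 'd and d :: "'a \<Rightarrow> 'a \<Rightarrow> 'd"
    and U :: "'u set" and dU :: "'u \<Rightarrow> 'u \<Rightarrow> rat"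
  assumes "countable_tsum_space X D z d"
    and "rat_urysohn_ultrametric U dU"
  shows "\<exists>\<phi>. group_hom (aut_group X D d) (aut_group U {q. 0 \<le> q} dU) \<phi> \<and>
             embedding_map (aut_top X D d) (aut_top U {q. 0 \<le> q} dU) \<phi>"
proof -
  have "z \<in> D" "countable X" "countable D"
    using assms(1) unfolding countable_tsum_space_def tsum_space_def by auto
  \<comment> \<open>The factor nat only makes the alphabet infinite when X and D are finite.\<close>
  then have "countable ((X <+> D) \<times> (UNIV :: nat set))" "infinite ((X <+> D) \<times> (UNIV :: nat set))"
    using finite_cartesian_productD2[of "X <+> D" "UNIV :: nat set"] by auto
  then obtain code :: "'u \<Rightarrow> rat \<rightharpoonup> ('a + 'd) \<times> nat"
    where "bij_betw code U (urysohn_model ((X <+> D) \<times> UNIV))"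
      "\<forall>x\<in>U. \<forall>y\<in>U. model_dist (code x) (code y) = dU x y"
    using rat_urysohn_ultrametric_isometric[OF assms(2) rat_urysohn_ultrametric_urysohn_model] by blast
  then interpret urysohn_coding X D d U dU code
    by unfold_locales auto
  show ?thesis
    using group_hom_aut_emb embedding_map_aut_emb by blast
qed

end
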